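(* Let $n/2 \leq r \leq n$ and let $(\mathcal{S},\mathcal{T})$ be an $r$-maximal cross-intersecting pair in $\binom{[n]}{\leq r}$. For any integer $\ell\ge0$ with $\ell \le r$ and $n-\ell \leq r$, \[|\mathcal{S}(n-\ell)|+ |\mathcal{T}(n-\ell)| + |\mathcal{S}(\ell)|+ |\mathcal{T}(\ell)| = |\mathcal{X}_{n, r}(n-\ell)| + |\mathcal{Y}_{n, r}(n-\ell)| + |\mathcal{X}_{n, r}(\ell)| + |\mathcal{Y}_{n, r}(\ell)|.\]
   Context: $\binom{[n]}{\le r}$ is the set of subsets of $[n]$ of size at most $r$. A pair $(\mathcal{S},\mathcal{T})$ of non-empty families of non-empty subsets is cross-intersecting if $S\cap T\ne\emptyset$ for all $S\in\mathcal{S},T\in\mathcal{T}$; it is $r$-maximal if whenever $(\mathcal{V},\mathcal{W})$ is a cross-intersecting pair in $\binom{[n]}{\le r}$ with $\mathcal{S}\subseteq\mathcal{V}$, $\mathcal{T}\subseteq\mathcal{W}$, then $(\mathcal{V},\mathcal{W})=(\mathcal{S},\mathcal{T})$. For a family $\mathcal{B}$, $\mathcal{B}(\ell)=\{B\in\mathcal{B}:|B|=\ell\}$. $\mathcal{X}_{n,r}=\{[r]\}$ and $\mathcal{Y}_{n,r}=\{Y\in\binom{[n]}{\le r}: Y\cap[r]\ne\emptyset\}$. *)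

theory Defs
  imports Main
begin

definition subsets_le :: "nat \<Rightarrow> nat \<Rightarrow> nat set set" where
  "subsets_le n r = {A. A \<subseteq> {1..n} \<and> card A \<le> r}"

definition cross_intersecting :: "nat set set \<Rightarrow> nat set set \<Rightarrow> bool" where
  "cross_intersecting S T \<longleftrightarrow>
     S \<noteq> {} \<and> T \<noteq> {} \<and> {} \<notin> S \<and> {} \<notin> T \<and>
     (\<forall>A\<in>S. \<forall>B\<in>T. A \<inter> B \<noteq> {})"

definition r_maximal :: "nat \<Rightarrow> nat \<Rightarrow> nat set set \<Rightarrow> nat set set \<Rightarrow> bool" where
  "r_maximal n r S T \<longleftrightarrow>
     S \<subseteq> subsets_le n r \<and> T \<subseteq> subsets_le n r \<and> cross_intersecting S T \<and>
     (\<forall>V W. V \<subseteq> subsets_le n r \<and> W \<subseteq> subsets_le n r \<and> cross_intersecting V W \<and>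
            S \<subseteq> V \<and> T \<subseteq> W \<longrightarrow> V = S \<and> W = T)"

definition layer :: "nat set set \<Rightarrow> nat \<Rightarrow> nat set set" where
  "layer B l = {A \<in> B. card A = l}"

definition X_fam :: "nat \<Rightarrow> nat \<Rightarrow> nat set set" where
  "X_fam n r = {{1..r}}"

definition Y_fam :: "nat \<Rightarrow> nat \<Rightarrow> nat set set" where
  "Y_fam n r = {Y \<in> subsets_le n r. Y \<inter> {1..r} \<noteq> {}}"

end

theory Submission
  imports Defs
begin

text \<open>For \<open>l \<le> r\<close> and \<open>n - l \<le> r\<close>, maximality makes complementation in \<open>[n]\<close> a bijection
  between the \<open>l\<close>-subsets of \<open>[n]\<close> outside \<open>S\<close> and the \<open>(n - l)\<close>-sets of \<open>T\<close>: an \<open>l\<close>-set \<open>A\<close>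
  misses \<open>S\<close> iff some \<open>B \<in> T\<close> is disjoint from \<open>A\<close>, and then \<open>[n] - A \<supseteq> B\<close> meets every set
  of \<open>S\<close>, so it lies in \<open>T\<close>. Hence \<open>|T(n - l)| + |S(l)| = C(n, l)\<close> for every \<open>r\<close>-maximal pair,
  and by symmetry also \<open>|S(n - l)| + |T(l)| = C(n, l)\<close>. Both sides of the identity therefore
  equal \<open>2 C(n, l)\<close>, since \<open>(X, Y)\<close> is itself \<open>r\<close>-maximal.\<close>

lemma cross_intersecting_commute: "cross_intersecting S T \<longleftrightarrow> cross_intersecting T S"
  unfolding cross_intersecting_def by (metis Int_commute)

lemma r_maximal_sym: "r_maximal n r S T \<Longrightarrow> r_maximal n r T S"
  unfolding r_maximal_def by (metis cross_intersecting_commute)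

lemma r_maximal_saturated:
  assumes max: "r_maximal n r S T" and A: "A \<in> subsets_le n r" and meets: "\<forall>B\<in>T. A \<inter> B \<noteq> {}"
  shows "A \<in> S"
proof -
  have "cross_intersecting S T" using max unfolding r_maximal_def by blast
  then have "cross_intersecting (insert A S) T"
    using meets unfolding cross_intersecting_def by auto
  moreover have "insert A S \<subseteq> subsets_le n r" using max A unfolding r_maximal_def by blast
  ultimately have "insert A S = S" using max unfolding r_maximal_def by blast
  then show ?thesis by blast
qed

lemma r_maximal_pos:
  assumes "r_maximal n r S T"
  shows "0 < r"
proof -
  have "cross_intersecting S T" and S_sub: "S \<subseteq> subsets_le n r"
    using assms unfolding r_maximal_def by auto
  then obtain A where "A \<in> S" "A \<noteq> {}" unfolding cross_intersecting_def by auto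
  with S_sub have "A \<subseteq> {1..n}" "card A \<le> r" "A \<noteq> {}" unfolding subsets_le_def by auto
  then have "0 < card A" by (simp add: card_gt_0_iff finite_subset)
  with \<open>card A \<le> r\<close> show ?thesis by linarith
qed

lemma X_Y_r_maximal:
  assumes "0 < r" "r \<le> n"
  shows "r_maximal n r (X_fam n r) (Y_fam n r)"
proof -
  have singleton_Y: "{i} \<in> Y_fam n r" if "i \<in> {1..r}" for i
    using that assms unfolding Y_fam_def subsets_le_def by auto
  have X_sub: "X_fam n r \<subseteq> subsets_le n r" using assms unfolding X_fam_def subsets_le_def by auto
  have Y_sub: "Y_fam n r \<subseteq> subsets_le n r" unfolding Y_fam_def by auto
  have "cross_intersecting (X_fam n r) (Y_fam n r)"
    using singleton_Y[of 1] assms unfolding cross_intersecting_def X_fam_def Y_fam_def by auto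
  moreover have "V = X_fam n r \<and> W = Y_fam n r"
    if V: "V \<subseteq> subsets_le n r" and W: "W \<subseteq> subsets_le n r" and ci: "cross_intersecting V W"
      and XV: "X_fam n r \<subseteq> V" and YW: "Y_fam n r \<subseteq> W" for V W
  proof
    have "{1..r} \<in> V" using XV unfolding X_fam_def by auto
    then show "W = Y_fam n r"
      using W ci YW unfolding cross_intersecting_def Y_fam_def by (auto simp: inf_commute)
    have V_only: "A = {1..r}" if A: "A \<in> V" for A
    proof -
      have "{1..r} \<subseteq> A" using singleton_Y YW ci A unfolding cross_intersecting_def by blast
      moreover have "card A \<le> r" "finite A" using A V unfolding subsets_le_def by (auto intro: finite_subset)
      ultimately show ?thesis by (metis card_atLeastAtMost card_seteq diff_Suc_1)
    qed
    show "V = X_fam n r" using XV V_only unfolding X_fam_def by blast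
  qed
  ultimately show ?thesis using X_sub Y_sub unfolding r_maximal_def by (intro conjI allI impI) blast+
qed

lemma card_layer_Pow_atLeastAtMost: "card (layer (Pow {1..n}) l) = n choose l"
proof -
  have "layer (Pow {1..n}) l = {A. A \<subseteq> {1..n} \<and> card A = l}" unfolding layer_def by auto
  then show ?thesis by (simp add: n_subsets)
qed

lemma r_maximal_layer_complement:
  assumes max: "r_maximal n r S T" and "l \<le> r" "n - l \<le> r" "l \<le> n"
  shows "layer T (n - l) = (\<lambda>A. {1..n} - A) ` (layer (Pow {1..n}) l - layer S l)"
proof -
  have ci: "cross_intersecting S T" and T_sub: "T \<subseteq> subsets_le n r"
    using max unfolding r_maximal_def by auto
  show ?thesis
  proof (intro equalityI subsetI)
    fix B assume "B \<in> layer T (n - l)"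
    then have B: "B \<in> T" "card B = n - l" "B \<subseteq> {1..n}"
      using T_sub unfolding layer_def subsets_le_def by auto
    then have "card ({1..n} - B) = l" using \<open>l \<le> n\<close> by (simp add: card_Diff_subset finite_subset)
    moreover have "{1..n} - B \<notin> S" using ci B unfolding cross_intersecting_def by auto
    moreover have "B = {1..n} - ({1..n} - B)" using B by auto
    ultimately show "B \<in> (\<lambda>A. {1..n} - A) ` (layer (Pow {1..n}) l - layer S l)"
      unfolding layer_def by blast
  next
    fix B assume "B \<in> (\<lambda>A. {1..n} - A) ` (layer (Pow {1..n}) l - layer S l)"
    then obtain A where A: "A \<subseteq> {1..n}" "card A = l" "A \<notin> S" and B_def: "B = {1..n} - A"
      unfolding layer_def by auto
    have "A \<in> subsets_le n r" using A \<open>l \<le> r\<close> unfolding subsets_le_def by auto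
    then obtain B0 where B0: "B0 \<in> T" "A \<inter> B0 = {}" using r_maximal_saturated[OF max] A by blast
    then have "B0 \<subseteq> B" using T_sub unfolding B_def subsets_le_def by auto
    then have "\<forall>A'\<in>S. B \<inter> A' \<noteq> {}" using ci B0 unfolding cross_intersecting_def by blast
    moreover have card_B: "card B = n - l" using A unfolding B_def by (simp add: card_Diff_subset finite_subset)
    moreover have "B \<in> subsets_le n r" using card_B \<open>n - l \<le> r\<close> unfolding B_def subsets_le_def by auto
    ultimately show "B \<in> layer T (n - l)"
      using r_maximal_saturated[OF max[THEN r_maximal_sym]] unfolding layer_def by blast
  qed
qed

lemma r_maximal_card_layers:
  assumes max: "r_maximal n r S T" and "l \<le> r" "n - l \<le> r" "l \<le> n"
  shows "card (layer T (n - l)) + card (layer S l) = n choose l"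
proof -
  have S_layer_sub: "layer S l \<subseteq> layer (Pow {1..n}) l"
    using max unfolding r_maximal_def subsets_le_def layer_def by auto
  have fin_layer: "finite (layer (Pow {1..n}) l)" unfolding layer_def by simp
  have "inj_on (\<lambda>A. {1..n} - A) (Pow {1..n})" by (rule inj_onI) blast
  then have "inj_on (\<lambda>A. {1..n} - A) (layer (Pow {1..n}) l - layer S l)"
    by (rule inj_on_subset) (auto simp: layer_def)
  then have "card (layer T (n - l)) = card (layer (Pow {1..n}) l - layer S l)"
    using r_maximal_layer_complement[OF assms] by (simp add: card_image)
  also have "\<dots> = card (layer (Pow {1..n}) l) - card (layer S l)"
    using S_layer_sub fin_layer by (simp add: card_Diff_subset finite_subset)
  finally show ?thesis
    using card_mono[OF fin_layer S_layer_sub] card_layer_Pow_atLeastAtMost by simp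
qed

theorem lemma5p2:
  fixes n r l :: nat and S T :: "nat set set"
  assumes "n \<le> 2 * r" and "r \<le> n"
    and "r_maximal n r S T"
    and "l \<le> r" and "n - l \<le> r"
  shows "card (layer S (n - l)) + card (layer T (n - l)) + card (layer S l) + card (layer T l)
       = card (layer (X_fam n r) (n - l)) + card (layer (Y_fam n r) (n - l))
         + card (layer (X_fam n r) l) + card (layer (Y_fam n r) l)"
proof -
  have "l \<le> n" using assms by simp
  have XY: "r_maximal n r (X_fam n r) (Y_fam n r)"
    using X_Y_r_maximal[OF r_maximal_pos[OF assms(3)] assms(2)] .
  note layers = r_maximal_card_layers[OF _ assms(4,5) \<open>l \<le> n\<close>]
  show ?thesis
    using layers[OF assms(3)] layers[OF assms(3)[THEN r_maximal_sym]]
      layers[OF XY] layers[OF XY[THEN r_maximal_sym]]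
    by simp
qed

end
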